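(* Let $G=(S,T,E,\varphi)$ be a weighted bipartite 2-graph with $|S|=m$, $|T|=n$, let $\mathcal{A}\in NBQ(m,n)$ be its adjacency tensor, and let $\mathcal{Q}=\mathcal{D}^0+\mathcal{D}^x+\mathcal{D}^y+\mathcal{A}$ and $\mathcal{L}=\mathcal{D}^0-\mathcal{D}^x-\mathcal{D}^y+\mathcal{A}$ be its signless Laplacian and Laplacian biquadratic tensors. Then both $\mathcal{Q}$ and $\mathcal{L}$ are positive semi-definite and SOS.
   Context: A biquadratic tensor is $\mathcal{A}=(a_{i_1j_1i_2j_2})\in\mathbb{R}^{m\times n\times m\times n}$ (indices $i_1,i_2\in[m]=\{1,\dots,m\}$, $j_1,j_2\in[n]$); $NBQ(m,n)$ denotes the set of entrywise nonnegative ones. Its associated form is $f(\mathbf{x},\mathbf{y})=\sum_{i_1,i_2=1}^m\sum_{j_1,j_2=1}^n a_{i_1j_1i_2j_2}x_{i_1}y_{j_1}x_{i_2}y_{j_2}$ for $\mathbf{x}\in\mathbb{R}^m,\mathbf{y}\in\mathbb{R}^n$. The tensor is positive semi-definite if $f(\mathbf{x},\mathbf{y})\ge 0$ for all $\mathbf{x},\mathbf{y}$, and SOS if $f$ is a sum of squares of polynomials in $(\mathbf{x},\mathbf{y})$. A bipartite 2-graph $G=(S,T,E)$ has vertex sets $S=\{u_1,\dots,u_m\}$, $T=\{v_1,\dots,v_n\}$ and an edge set $E$ whose elements are pairs $(\{u_{i_1},u_{i_2}\},\{v_{j_1},v_{j_2}\})$ of a 2-element subset of $S$ (so $i_1\ne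 i_2$) and a 2-element subset of $T$ (so $j_1\neq j_2$), with no edge repeated. A weighted bipartite 2-graph additionally has a weight function $\varphi:E\to[0,\infty)$. Its adjacency tensor $\mathcal{A}=(a_{i_1j_1i_2j_2})\in NBQ(m,n)$ is defined by $a_{i_1j_1i_2j_2}=\varphi(e)$ if $i_1\ne i_2$, $j_1\ne j_2$ and $e=(\{u_{i_1},u_{i_2}\},\{v_{j_1},v_{j_2}\})\in E$, and $a_{i_1j_1i_2j_2}=0$ otherwise. (For an unweighted graph, $\varphi\equiv 1$.) The tensors $\mathcal{D}^0,\mathcal{D}^x,\mathcal{D}^y\in NBQ(m,n)$ are defined by: $d^0_{i_1j_1i_2j_2}=\sum_{i_2'=1}^m\sum_{j_2'=1}^n a_{i_1j_1i_2'j_2'}$ if $i_1=i_2$ and $j_1=j_2$, and $0$ otherwise; $d^x_{i_1j_1i_2j_2}=\sum_{i_2'=1}^m a_{i_1j_1i_2'j_2}$ if $i_1=i_2$, and $0$ otherwise; $d^y_{i_1j_1i_2j_2}=\sum_{j_2'=1}^n a_{i_1j_1i_2j_2'}$ if $j_1=j_2$, and $0$ otherwise. *)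

theory Defs
  imports Main "HOL.Real"
begin

text \<open>Indices: S = {0..<m}, T = {0..<n}. A biquadratic tensor of size m x n x m x n is
  a function nat => nat => nat => nat => real, only entries with indices in range matter.\<close>

type_synonym bqtensor = "nat \<Rightarrow> nat \<Rightarrow> nat \<Rightarrow> nat \<Rightarrow> real"

definition weighted_bip2graph ::
  "nat \<Rightarrow> nat \<Rightarrow> (nat set \<times> nat set) set \<Rightarrow> (nat set \<times> nat set \<Rightarrow> real) \<Rightarrow> bool" where
  "weighted_bip2graph m n E \<phi> \<longleftrightarrow>
     (\<forall>e\<in>E. fst e \<subseteq> {0..<m} \<and> card (fst e) = 2 \<and> snd e \<subseteq> {0..<n} \<and> card (snd e) = 2)
     \<and> (\<forall>e\<in>E. \<phi> e \<ge> 0)"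

definition adj_tensor :: "(nat set \<times> nat set) set \<Rightarrow> (nat set \<times> nat set \<Rightarrow> real) \<Rightarrow> bqtensor" where
  "adj_tensor E \<phi> = (\<lambda>i1 j1 i2 j2.
     if i1 \<noteq> i2 \<and> j1 \<noteq> j2 \<and> ({i1, i2}, {j1, j2}) \<in> E then \<phi> ({i1, i2}, {j1, j2}) else 0)"

definition D0 :: "nat \<Rightarrow> nat \<Rightarrow> bqtensor \<Rightarrow> bqtensor" where
  "D0 m n A = (\<lambda>i1 j1 i2 j2.
     if i1 = i2 \<and> j1 = j2 then (\<Sum>i2'<m. \<Sum>j2'<n. A i1 j1 i2' j2') else 0)"

definition Dx :: "nat \<Rightarrow> nat \<Rightarrow> bqtensor \<Rightarrow> bqtensor" where
  "Dx m n A = (\<lambda>i1 j1 i2 j2. if i1 = i2 then (\<Sum>i2'<m. A i1 j1 i2' j2) else 0)"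

definition Dy :: "nat \<Rightarrow> nat \<Rightarrow> bqtensor \<Rightarrow> bqtensor" where
  "Dy m n A = (\<lambda>i1 j1 i2 j2. if j1 = j2 then (\<Sum>j2'<n. A i1 j1 i2 j2') else 0)"

definition signless_laplacian :: "nat \<Rightarrow> nat \<Rightarrow> bqtensor \<Rightarrow> bqtensor" where
  "signless_laplacian m n A = (\<lambda>i1 j1 i2 j2.
     D0 m n A i1 j1 i2 j2 + Dx m n A i1 j1 i2 j2 + Dy m n A i1 j1 i2 j2 + A i1 j1 i2 j2)"

definition laplacian :: "nat \<Rightarrow> nat \<Rightarrow> bqtensor \<Rightarrow> bqtensor" where
  "laplacian m n A = (\<lambda>i1 j1 i2 j2.
     D0 m n A i1 j1 i2 j2 - Dx m n A i1 j1 i2 j2 - Dy m n A i1 j1 i2 j2 + A i1 j1 i2 j2)"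

definition bq_form :: "nat \<Rightarrow> nat \<Rightarrow> bqtensor \<Rightarrow> (nat \<Rightarrow> real) \<Rightarrow> (nat \<Rightarrow> real) \<Rightarrow> real" where
  "bq_form m n A x y = (\<Sum>i1<m. \<Sum>j1<n. \<Sum>i2<m. \<Sum>j2<n.
       A i1 j1 i2 j2 * x i1 * y j1 * x i2 * y j2)"

definition bq_psd :: "nat \<Rightarrow> nat \<Rightarrow> bqtensor \<Rightarrow> bool" where
  "bq_psd m n A \<longleftrightarrow> (\<forall>x y. bq_form m n A x y \<ge> 0)"

inductive poly_fun :: "nat \<Rightarrow> nat \<Rightarrow> ((nat \<Rightarrow> real) \<Rightarrow> (nat \<Rightarrow> real) \<Rightarrow> real) \<Rightarrow> bool"
  for m n where
  pf_const: "poly_fun m n (\<lambda>x y. c)"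
| pf_varx: "i < m \<Longrightarrow> poly_fun m n (\<lambda>x y. x i)"
| pf_vary: "j < n \<Longrightarrow> poly_fun m n (\<lambda>x y. y j)"
| pf_add: "poly_fun m n p \<Longrightarrow> poly_fun m n q \<Longrightarrow> poly_fun m n (\<lambda>x y. p x y + q x y)"
| pf_mult: "poly_fun m n p \<Longrightarrow> poly_fun m n q \<Longrightarrow> poly_fun m n (\<lambda>x y. p x y * q x y)"

definition bq_sos :: "nat \<Rightarrow> nat \<Rightarrow> bqtensor \<Rightarrow> bool" where
  "bq_sos m n A \<longleftrightarrow> (\<exists>gs. (\<forall>g\<in>set gs. poly_fun m n g) \<and>
      (\<forall>x y. bq_form m n A x y = (\<Sum>g\<leftarrow>gs. (g x y)\<^sup>2)))"

end

theory Submission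
  imports Defs Complex_Main
begin

text \<open>Writing \<open>\<sigma> = 1\<close> for \<open>Q\<close> and \<open>\<sigma> = -1\<close> for \<open>L\<close>, the degree tensors supply exactly
  the partially diagonal terms that turn the form into
  \<open>\<Sum> a(i1,j1,i2,j2) x(i1) (x(i1) + \<sigma> x(i2)) y(j1) (y(j1) + \<sigma> y(j2))\<close>.
  An edge \<open>({a,b},{c,d})\<close> of weight \<open>w\<close> sits at the four orientations of its index pairs,
  which together contribute \<open>w (x(a) + \<sigma> x(b))\<^sup>2 (y(c) + \<sigma> y(d))\<^sup>2\<close>.\<close>

lemma bq_form_D0:
  "bq_form m n (D0 m n A) x y =
     (\<Sum>i1<m. \<Sum>j1<n. \<Sum>i2<m. \<Sum>j2<n. A i1 j1 i2 j2 * (x i1 * x i1) * (y j1 * y j1))"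
proof -
  have "(\<Sum>i2<m. \<Sum>j2<n. D0 m n A i1 j1 i2 j2 * x i1 * y j1 * x i2 * y j2) =
      (\<Sum>i2<m. \<Sum>j2<n. A i1 j1 i2 j2 * (x i1 * x i1) * (y j1 * y j1))"
    if "i1 < m" "j1 < n" for i1 j1
    using that unfolding D0_def if_distrib[where f="\<lambda>t. t * c" for c] mult_zero_left
    by (simp add: conj_commute[of "i1 = i2" for i2] sum_distrib_left mult_ac flip: if_if_eq_conj)
  then show ?thesis by (simp add: bq_form_def)
qed

lemma bq_form_Dx:
  "bq_form m n (Dx m n A) x y =
     (\<Sum>i1<m. \<Sum>j1<n. \<Sum>i2<m. \<Sum>j2<n. A i1 j1 i2 j2 * (x i1 * x i1) * (y j1 * y j2))"
proof -
  have "(\<Sum>i2<m. \<Sum>j2<n. Dx m n A i1 j1 i2 j2 * x i1 * y j1 * x i2 * y j2) =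
      (\<Sum>i2<m. \<Sum>j2<n. A i1 j1 i2 j2 * (x i1 * x i1) * (y j1 * y j2))"
    if "i1 < m" for i1 j1
    using that unfolding Dx_def if_distrib[where f="\<lambda>t. t * c" for c] mult_zero_left
    by (simp add: sum_distrib_left mult_ac sum.swap[of _ "{..<n}"])
  then show ?thesis by (simp add: bq_form_def)
qed

lemma bq_form_Dy:
  "bq_form m n (Dy m n A) x y =
     (\<Sum>i1<m. \<Sum>j1<n. \<Sum>i2<m. \<Sum>j2<n. A i1 j1 i2 j2 * (x i1 * x i2) * (y j1 * y j1))"
proof -
  have "(\<Sum>j2<n. Dy m n A i1 j1 i2 j2 * x i1 * y j1 * x i2 * y j2) =
      (\<Sum>j2<n. A i1 j1 i2 j2 * (x i1 * x i2) * (y j1 * y j1))"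
    if "j1 < n" for i1 j1 i2
    using that unfolding Dy_def if_distrib[where f="\<lambda>t. t * c" for c] mult_zero_left
    by (simp add: sum_distrib_left mult_ac)
  then show ?thesis by (simp add: bq_form_def)
qed

definition signed_laplacian :: "real \<Rightarrow> nat \<Rightarrow> nat \<Rightarrow> bqtensor \<Rightarrow> bqtensor" where
  "signed_laplacian \<sigma> m n A = (\<lambda>i1 j1 i2 j2.
     D0 m n A i1 j1 i2 j2 + \<sigma> * Dx m n A i1 j1 i2 j2 + \<sigma> * Dy m n A i1 j1 i2 j2 + A i1 j1 i2 j2)"

lemma signless_laplacian_eq: "signless_laplacian m n A = signed_laplacian 1 m n A"
  by (simp add: signless_laplacian_def signed_laplacian_def)

lemma laplacian_eq: "laplacian m n A = signed_laplacian (-1) m n A"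
  by (simp add: laplacian_def signed_laplacian_def)

lemma bq_form_signed_laplacian:
  assumes "\<sigma> * \<sigma> = 1"
  shows "bq_form m n (signed_laplacian \<sigma> m n A) x y =
     (\<Sum>i1<m. \<Sum>j1<n. \<Sum>i2<m. \<Sum>j2<n.
        A i1 j1 i2 j2 * (x i1 * (x i1 + \<sigma> * x i2)) * (y j1 * (y j1 + \<sigma> * y j2)))"
proof -
  have \<sigma>\<sigma>: "\<sigma> * (\<sigma> * z) = z" for z
    using assms by (simp add: mult.assoc[symmetric])
  have "bq_form m n (signed_laplacian \<sigma> m n A) x y =
      bq_form m n (D0 m n A) x y + \<sigma> * bq_form m n (Dx m n A) x y
      + \<sigma> * bq_form m n (Dy m n A) x y + bq_form m n A x y"
    by (simp add: signed_laplacian_def bq_form_def sum.distrib sum_distrib_left algebra_simps)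
  then show ?thesis
    unfolding bq_form_D0 bq_form_Dx bq_form_Dy
    by (simp add: bq_form_def sum_distrib_left flip: sum.distrib) (simp add: algebra_simps \<sigma>\<sigma>)
qed

definition sum_orientations :: "nat \<Rightarrow> (nat \<Rightarrow> nat \<Rightarrow> real) \<Rightarrow> nat set \<Rightarrow> real" where
  "sum_orientations m U s = (\<Sum>i1<m. \<Sum>i2<m. if i1 \<noteq> i2 \<and> {i1, i2} = s then U i1 i2 else 0)"

lemma sum_orientations_doubleton:
  assumes "a \<noteq> b" "a < m" "b < m"
  shows "sum_orientations m U {a, b} = U a b + U b a"
proof -
  have "sum_orientations m U {a, b} =
      (\<Sum>i1<m. \<Sum>i2<m. (if b = i2 then if a = i1 then U i1 i2 else 0 else 0)
                        + (if a = i2 then if b = i1 then U i1 i2 else 0 else 0))"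
    unfolding sum_orientations_def using assms
    by (intro sum.cong refl) (auto simp: doubleton_eq_iff)
  then show ?thesis
    using assms by (simp add: sum.distrib)
qed

lemma sum_orientations_signed_square:
  assumes "\<sigma> * \<sigma> = 1" and "s \<subseteq> {0..<m}" "card s = 2"
  shows "sum_orientations m (\<lambda>i1 i2. x i1 * (x i1 + \<sigma> * x i2)) s = (x (Min s) + \<sigma> * x (Max s))\<^sup>2"
proof -
  obtain a b where ab: "s = {a, b}" "a < b"
  proof -
    obtain a b where "s = {a, b}" "a \<noteq> b"
      using \<open>card s = 2\<close> by (auto simp: card_2_iff)
    then show thesis
      using that[of a b] that[of b a] by (metis insert_commute linorder_neqE_nat)
  qed
  have "b < m"
    using ab \<open>s \<subseteq> {0..<m}\<close> by auto
  then have "sum_orientations m (\<lambda>i1 i2. x i1 * (x i1 + \<sigma> * x i2)) s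
      = x a * x a + x b * x b + 2 * \<sigma> * x a * x b"
    using ab by (simp add: sum_orientations_doubleton algebra_simps)
  also have "\<dots> = (x a + \<sigma> * x b)\<^sup>2"
    using assms(1) by (simp add: power2_eq_square algebra_simps)
  finally show ?thesis
    using ab by simp
qed

lemma adj_tensor_eq_sum_edges:
  assumes "finite E"
  shows "adj_tensor E \<phi> i1 j1 i2 j2 * u * v =
    (\<Sum>e\<in>E. \<phi> e * (if i1 \<noteq> i2 \<and> {i1, i2} = fst e then u else 0)
                * (if j1 \<noteq> j2 \<and> {j1, j2} = snd e then v else 0))"
proof -
  have "(\<Sum>e\<in>E. \<phi> e * (if i1 \<noteq> i2 \<and> {i1, i2} = fst e then u else 0)
                * (if j1 \<noteq> j2 \<and> {j1, j2} = snd e then v else 0))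
      = (\<Sum>e\<in>E. if ({i1, i2}, {j1, j2}) = e then
                  if i1 \<noteq> i2 \<and> j1 \<noteq> j2 then \<phi> e * u * v else 0 else 0)"
    by (intro sum.cong refl) auto
  then show ?thesis
    using assms by (simp add: adj_tensor_def)
qed

lemma sum_adj_tensor_edges:
  assumes "finite E"
  shows "(\<Sum>i1<m. \<Sum>j1<n. \<Sum>i2<m. \<Sum>j2<n. adj_tensor E \<phi> i1 j1 i2 j2 * U i1 i2 * V j1 j2)
       = (\<Sum>e\<in>E. \<phi> e * sum_orientations m U (fst e) * sum_orientations n V (snd e))"
proof -
  let ?F = "\<lambda>e i1 j1 i2 j2. \<phi> e * (if i1 \<noteq> i2 \<and> {i1, i2} = fst e then U i1 i2 else 0)
                              * (if j1 \<noteq> j2 \<and> {j1, j2} = snd e then V j1 j2 else 0)"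
  have "(\<Sum>i1<m. \<Sum>j1<n. \<Sum>i2<m. \<Sum>j2<n. adj_tensor E \<phi> i1 j1 i2 j2 * U i1 i2 * V j1 j2)
      = (\<Sum>i1<m. \<Sum>j1<n. \<Sum>i2<m. \<Sum>j2<n. \<Sum>e\<in>E. ?F e i1 j1 i2 j2)"
    by (simp only: adj_tensor_eq_sum_edges[OF assms])
  also have "\<dots> = (\<Sum>e\<in>E. \<Sum>i1<m. \<Sum>j1<n. \<Sum>i2<m. \<Sum>j2<n. ?F e i1 j1 i2 j2)"
    by (simp only: sum.swap[where B = E])
  also have "\<dots> = (\<Sum>e\<in>E. \<phi> e * sum_orientations m U (fst e) * sum_orientations n V (snd e))"
    by (simp add: sum_orientations_def sum_distrib_left sum_distrib_right mult.assoc
        sum.swap[of _ "{..<m}" "{..<n}"])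
  finally show ?thesis .
qed

lemma poly_fun_x_lincomb: "i < m \<Longrightarrow> k < m \<Longrightarrow> poly_fun m n (\<lambda>x y. x i + c * x k)"
  by (intro pf_add pf_mult pf_varx pf_const)

lemma poly_fun_y_lincomb: "j < n \<Longrightarrow> l < n \<Longrightarrow> poly_fun m n (\<lambda>x y. y j + c * y l)"
  by (intro pf_add pf_mult pf_vary pf_const)

lemma bq_sos_imp_psd: "bq_sos m n A \<Longrightarrow> bq_psd m n A"
  unfolding bq_sos_def bq_psd_def by (auto intro!: sum_list_nonneg)

lemma bq_sos_sum_squares:
  assumes "finite I" and "\<And>i. i \<in> I \<Longrightarrow> poly_fun m n (g i)"
    and "\<And>x y. bq_form m n A x y = (\<Sum>i\<in>I. (g i x y)\<^sup>2)"
  shows "bq_sos m n A"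
proof -
  obtain gs where "set gs = I" "distinct gs"
    using finite_distinct_list[OF \<open>finite I\<close>] by blast
  then show ?thesis
    unfolding bq_sos_def using assms(2,3)
    by (intro exI[of _ "map g gs"]) (auto simp: sum_list_distinct_conv_sum_set comp_def)
qed

lemma weighted_bip2graph_finite:
  assumes "weighted_bip2graph m n E \<phi>"
  shows "finite E"
proof (rule finite_subset)
  show "E \<subseteq> Pow {0..<m} \<times> Pow {0..<n}"
    using assms unfolding weighted_bip2graph_def by fastforce
qed simp

lemma bq_sos_signed_laplacian_adj:
  assumes G: "weighted_bip2graph m n E \<phi>" and \<sigma>: "\<sigma> * \<sigma> = 1"
  shows "bq_sos m n (signed_laplacian \<sigma> m n (adj_tensor E \<phi>))"
proof (rule bq_sos_sum_squares)
  show "finite E"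
    using G by (rule weighted_bip2graph_finite)
  have edge: "fst e \<subseteq> {0..<m}" "card (fst e) = 2" "snd e \<subseteq> {0..<n}" "card (snd e) = 2"
    and weight: "\<phi> e \<ge> 0" if "e \<in> E" for e
    using G that unfolding weighted_bip2graph_def by auto
  define g where "g e x y = sqrt (\<phi> e)
      * (x (Min (fst e)) + \<sigma> * x (Max (fst e))) * (y (Min (snd e)) + \<sigma> * y (Max (snd e)))"
    for e x y
  show "poly_fun m n (g e)" if "e \<in> E" for e
  proof -
    have "fst e \<noteq> {}" "snd e \<noteq> {}" "finite (fst e)" "finite (snd e)"
      using edge[OF that] by (auto intro: finite_subset)
    then have "Min (fst e) \<in> {0..<m}" "Max (fst e) \<in> {0..<m}"
        "Min (snd e) \<in> {0..<n}" "Max (snd e) \<in> {0..<n}"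
      using edge(1,3)[OF that] Min_in Max_in by blast+
    then show ?thesis
      unfolding g_def by (intro pf_mult pf_const poly_fun_x_lincomb poly_fun_y_lincomb) simp_all
  qed
  show "bq_form m n (signed_laplacian \<sigma> m n (adj_tensor E \<phi>)) x y = (\<Sum>e\<in>E. (g e x y)\<^sup>2)" for x y
    unfolding bq_form_signed_laplacian[OF \<sigma>] sum_adj_tensor_edges[OF \<open>finite E\<close>]
  proof (rule sum.cong[OF refl])
    fix e assume "e \<in> E"
    then show "\<phi> e * sum_orientations m (\<lambda>i1 i2. x i1 * (x i1 + \<sigma> * x i2)) (fst e)
        * sum_orientations n (\<lambda>j1 j2. y j1 * (y j1 + \<sigma> * y j2)) (snd e) = (g e x y)\<^sup>2"
      using edge weight \<sigma>
      by (simp add: g_def sum_orientations_signed_square power_mult_distrib)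
  qed
qed

theorem lemma3p1:
  fixes m n :: nat and E :: "(nat set \<times> nat set) set" and \<phi> :: "nat set \<times> nat set \<Rightarrow> real"
  assumes "weighted_bip2graph m n E \<phi>"
  shows "bq_psd m n (signless_laplacian m n (adj_tensor E \<phi>))
       \<and> bq_sos m n (signless_laplacian m n (adj_tensor E \<phi>))
       \<and> bq_psd m n (laplacian m n (adj_tensor E \<phi>))
       \<and> bq_sos m n (laplacian m n (adj_tensor E \<phi>))"
proof -
  have "bq_sos m n (signless_laplacian m n (adj_tensor E \<phi>))"
    using bq_sos_signed_laplacian_adj[OF assms, of 1] by (simp add: signless_laplacian_eq)
  moreover have "bq_sos m n (laplacian m n (adj_tensor E \<phi>))"
    using bq_sos_signed_laplacian_adj[OF assms, of "-1"] by (simp add: laplacian_eq)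
  ultimately show ?thesis
    by (simp add: bq_sos_imp_psd)
qed

end
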